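(* Let $k,p$ (functions of $n$) satisfy $k=\omega(\log n)$ and $p=\omega(\log n/n)$, and with $\delta:=4.03p$ and $R:=k/n$ assume $H_2(\delta)+\delta\log 3<1-R$, where $H_2(x)=-x\log x-(1-x)\log(1-x)$. Consider the function family described in the context. Suppose there exists an algorithm $\mathcal A$ running in time $T$ such that $\Pr_{\mathcal A,I,x}[f_I(\mathcal A(I,f_I(x)))=f_I(x)]=1/\mathrm{poly}(n)$, where $I\sim\mathsf{Gen}(1^n)$ and $x\sim\mathsf{Sample}(I)$. Then there exists an algorithm $\mathcal B$ running in time $T+\mathrm{poly}(n)$ which solves Search $\mathsf{LSN}(k,n,p)$ with probability $1/2^k+1/\mathrm{poly}(n)=1/\mathrm{poly}(n)$.
   Context: Symplectic inner product on $\mathbb{Z}_2^{2n}$: $(\mathbf a,\mathbf b)\odot(\mathbf a',\mathbf b')=\mathbf a\cdot\mathbf b'+\mathbf a'\cdot\mathbf b\pmod2$; a matrix is isotropic if its columns are pairwise symplectically orthogonal. $\mathcal{D}_p^{\otimes n}$: random $\mathbf e\in\mathbb{Z}_2^{2n}$ with independent pairs $(e_j,e_{n+j})$, each $(0,0)$ w.p. $1-p$ and each of $(0,1),(1,0),(1,1)$ w.p. $p/3$. The weight of $\mathbf e\in\mathbb{Z}_2^{2n}$ is the number of $j$ with $(e_j,e_{n+j})\neq(0,0)$; $\mathcal W_d$ is the set of $\mathbf e\in\mathbb{Z}_2^{2n}$ of weight at most $d$. Logarithms are base 2. Search $\mathsf{LSN}(k,n,p)$: given $([\mathbf A|\mathbf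 B],\mathbf A\mathbf r+\mathbf B\mathbf y+\mathbf e)$ with $\mathbf A\in\mathbb{Z}_2^{2n\times n}$, $\mathbf B\in\mathbb{Z}_2^{2n\times k}$ uniformly random subject to $\mathbf A$, $\mathbf B$ isotropic and $[\mathbf A|\mathbf B]$ full rank, $\mathbf r\sim\mathbb{Z}_2^n$, $\mathbf y\sim\mathbb{Z}_2^k$, $\mathbf e\sim\mathcal{D}_p^{\otimes n}$, output $\mathbf y$ with probability at least $1/2^k+1/\mathrm{poly}(n)$. Function family: $\mathsf{Gen}(1^n)$ outputs $I=(\mathbf A,\mathbf B)$ sampled as in $\mathsf{LSN}$. Domain $\mathcal D_I=\mathbb{Z}_2^n\times\mathbb{Z}_2^k\times\mathcal W_{2.01np}$. $\mathsf{Sample}(I)$ outputs $(\mathbf r,\mathbf y,\mathbf e)$ with $\mathbf r\sim\mathbb{Z}_2^n$, $\mathbf y\sim\mathbb{Z}_2^k$, $\mathbf e\sim\mathcal{D}_p^{\otimes n}$, replacing $\mathbf e$ by $\mathbf 0$ if its weight exceeds $2.01np$. $f_I(\mathbf r,\mathbf y,\mathbf e)=(\mathbf A,\mathbf B,\mathbf A\mathbf r+\mathbf B\mathbf y+\mathbf e)$. *)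

theory Defs
  imports "HOL-Probability.Probability" "HOL-Library.Landau_Symbols"
begin

text \<open>Vectors over Z_2 are bool lists (True = 1, addition = xor).
 A vector of Z_2^{2n} is a list of length 2n whose first n entries are the
 a-part and last n entries the b-part. A 2n x m matrix is the list of its m columns.\<close>

type_synonym vec = "bool list"
type_synonym inst = "vec list \<times> vec list"

definition vadd :: "vec \<Rightarrow> vec \<Rightarrow> vec" where
  "vadd u v = map2 (\<noteq>) u v"

definition zerovec :: "nat \<Rightarrow> vec" where
  "zerovec m = replicate m False"

definition dotp :: "vec \<Rightarrow> vec \<Rightarrow> bool" where
  "dotp u v = odd (length (filter id (map2 (\<and>) u v)))"

definition symp :: "nat \<Rightarrow> vec \<Rightarrow> vec \<Rightarrow> bool" where
  "symp n u v = (dotp (take n u) (drop n v) \<noteq> dotp (take n v) (drop n u))"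

definition isotropic :: "nat \<Rightarrow> vec list \<Rightarrow> bool" where
  "isotropic n M = (\<forall>u\<in>set M. \<forall>v\<in>set M. \<not> symp n u v)"

definition mat_vec :: "nat \<Rightarrow> vec list \<Rightarrow> vec \<Rightarrow> vec" where
  "mat_vec m M x = foldr vadd (map fst (filter snd (zip M x))) (zerovec m)"

definition col_indep :: "nat \<Rightarrow> vec list \<Rightarrow> bool" where
  "col_indep m M = (\<forall>x. length x = length M \<and> mat_vec m M x = zerovec m \<longrightarrow> x = zerovec (length M))"

definition vecs :: "nat \<Rightarrow> vec set" where
  "vecs m = {v. length v = m}"

definition mats :: "nat \<Rightarrow> nat \<Rightarrow> vec list set" where
  "mats m c = {M. length M = c \<and> (\<forall>v\<in>set M. length v = m)}"

definition lsn_instances :: "nat \<Rightarrow> nat \<Rightarrow> inst set" where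
  "lsn_instances n k = {(MA, MB). MA \<in> mats (2*n) n \<and> MB \<in> mats (2*n) k \<and>
      isotropic n MA \<and> isotropic n MB \<and> col_indep (2*n) (MA @ MB)}"

definition Gen :: "nat \<Rightarrow> nat \<Rightarrow> inst pmf" where
  "Gen n k = pmf_of_set (lsn_instances n k)"

text \<open>Single-qubit depolarizing pair distribution.\<close>
definition pauli_pmf :: "real \<Rightarrow> (bool \<times> bool) pmf" where
  "pauli_pmf p = bind_pmf (bernoulli_pmf p)
     (\<lambda>b. if b then pmf_of_set {(False,True),(True,False),(True,True)} else return_pmf (False,False))"

fun noise_pairs :: "real \<Rightarrow> nat \<Rightarrow> (bool \<times> bool) list pmf" where
  "noise_pairs p 0 = return_pmf []"
| "noise_pairs p (Suc n) = bind_pmf (pauli_pmf p) (\<lambda>x. map_pmf (\<lambda>xs. x # xs) (noise_pairs p n))"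

text \<open>D_p^{\<otimes>n}: pair j is (e_j, e_{n+j}).\<close>
definition noise :: "real \<Rightarrow> nat \<Rightarrow> vec pmf" where
  "noise p n = map_pmf (\<lambda>ps. map fst ps @ map snd ps) (noise_pairs p n)"

definition weight :: "nat \<Rightarrow> vec \<Rightarrow> nat" where
  "weight n e = card {j. j < n \<and> (e ! j \<or> e ! (n + j))}"

definition Wset :: "nat \<Rightarrow> real \<Rightarrow> vec set" where
  "Wset n d = {e \<in> vecs (2*n). real (weight n e) \<le> d}"

definition dom_set :: "nat \<Rightarrow> nat \<Rightarrow> real \<Rightarrow> (vec \<times> vec \<times> vec) set" where
  "dom_set n k p = vecs n \<times> vecs k \<times> Wset n (2.01 * real n * p)"

definition encode :: "nat \<Rightarrow> inst \<Rightarrow> vec \<Rightarrow> vec \<Rightarrow> vec \<Rightarrow> vec" where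
  "encode n I r y e = vadd (vadd (mat_vec (2*n) (fst I) r) (mat_vec (2*n) (snd I) y)) e"

definition fI :: "nat \<Rightarrow> inst \<Rightarrow> vec \<times> vec \<times> vec \<Rightarrow> vec list \<times> vec list \<times> vec" where
  "fI n I x = (case x of (r, y, e) \<Rightarrow> (fst I, snd I, encode n I r y e))"

definition Sample :: "nat \<Rightarrow> nat \<Rightarrow> real \<Rightarrow> inst \<Rightarrow> (vec \<times> vec \<times> vec) pmf" where
  "Sample n k p I =
     bind_pmf (pmf_of_set (vecs n)) (\<lambda>r.
     bind_pmf (pmf_of_set (vecs k)) (\<lambda>y.
     bind_pmf (noise p n) (\<lambda>e.
     return_pmf (r, y, if real (weight n e) > 2.01 * real n * p then zerovec (2*n) else e))))"

definition invert_success ::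
  "nat \<Rightarrow> nat \<Rightarrow> real \<Rightarrow> (inst \<Rightarrow> vec list \<times> vec list \<times> vec \<Rightarrow> (vec \<times> vec \<times> vec) pmf) \<Rightarrow> real" where
  "invert_success n k p Adv = pmf
     (bind_pmf (Gen n k) (\<lambda>I.
      bind_pmf (Sample n k p I) (\<lambda>x.
      bind_pmf (Adv I (fI n I x)) (\<lambda>out.
      return_pmf (out \<in> dom_set n k p \<and> fI n I out = fI n I x))))) True"

definition lsn_success ::
  "nat \<Rightarrow> nat \<Rightarrow> real \<Rightarrow> (vec list \<times> vec list \<times> vec \<Rightarrow> vec pmf) \<Rightarrow> real" where
  "lsn_success n k p Solver = pmf
     (bind_pmf (Gen n k) (\<lambda>I.
      bind_pmf (pmf_of_set (vecs n)) (\<lambda>r.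
      bind_pmf (pmf_of_set (vecs k)) (\<lambda>y.
      bind_pmf (noise p n) (\<lambda>e.
      bind_pmf (Solver (fst I, snd I, encode n I r y e)) (\<lambda>y'.
      return_pmf (y' = y))))))) True"

definition reduction ::
  "(inst \<Rightarrow> vec list \<times> vec list \<times> vec \<Rightarrow> (vec \<times> vec \<times> vec) pmf) \<Rightarrow> (vec list \<times> vec list \<times> vec \<Rightarrow> vec pmf)" where
  "reduction Adv = (\<lambda>(MA, MB, z). map_pmf (\<lambda>(r, y, e). y) (Adv (MA, MB) (MA, MB, z)))"

definition H2 :: "real \<Rightarrow> real" where
  "H2 x = - x * log 2 x - (1 - x) * log 2 (1 - x)"

end

theory Submission
  imports Defs
begin

text \<open>
  A successful inversion of \<open>f\<^sub>I\<close> yields \<open>(r', y', e')\<close> with \<open>wt e' \<le> 2.01 n p\<close> and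
  \<open>A r' + B y' + e' = A r + B y + e\<close>. Unless the sampled noise was truncated (which a
  Chernoff bound makes exponentially unlikely in \<open>p n\<close>), \<open>e + e'\<close> is then a codeword
  \<open>A u + B v\<close> of weight at most \<open>4.02 n p\<close>, and \<open>y' \<noteq> y\<close> would make it a light codeword
  with \<open>v \<noteq> 0\<close>. Symplectic transvections preserve the distribution of instances and act
  transitively on nonzero vectors, so a fixed nonzero vector is such a codeword with
  probability at most \<open>2^(n+k) / (4^n - 1)\<close>; a union bound over the at most
  \<open>2^(n (H2 \<delta> + \<delta> log 3)) 2^(-\<Omega>(p n))\<close> light vectors, together with
  \<open>H2 \<delta> + \<delta> log 3 < 1 - k/n\<close>, makes this exponentially unlikely as well. Hence outputting
  \<open>y'\<close> solves LSN with the inverter's success probability up to \<open>2^(-\<Omega>(p n))\<close>, which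
  exceeds \<open>2^(-k) + 1/poly(n)\<close> because \<open>k\<close> and \<open>p n\<close> are \<open>\<omega>(log n)\<close>.
\<close>

lemma length_vadd [simp]: "length (vadd u v) = min (length u) (length v)"
  by (simp add: vadd_def)

lemma nth_vadd [simp]: "i < length u \<Longrightarrow> i < length v \<Longrightarrow> vadd u v ! i = (u ! i \<noteq> v ! i)"
  by (simp add: vadd_def)

lemma vadd_Cons [simp]: "vadd (a # u) (b # v) = (a \<noteq> b) # vadd u v"
  by (simp add: vadd_def)

lemma vadd_Nil [simp]: "vadd [] v = []" "vadd u [] = []"
  by (simp_all add: vadd_def)

lemma vadd_append: "length u = length v \<Longrightarrow> vadd (u @ u') (v @ v') = vadd u v @ vadd u' v'"
  by (simp add: vadd_def)

lemma take_vadd: "take n (vadd u v) = vadd (take n u) (take n v)"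
  by (simp add: vadd_def take_map take_zip)

lemma drop_vadd: "drop n (vadd u v) = vadd (drop n u) (drop n v)"
  by (simp add: vadd_def drop_map drop_zip)

lemma length_zerovec [simp]: "length (zerovec m) = m"
  by (simp add: zerovec_def)

lemma nth_zerovec [simp]: "i < m \<Longrightarrow> zerovec m ! i = False"
  by (simp add: zerovec_def)

lemma zerovec_0 [simp]: "zerovec 0 = []"
  by (simp add: zerovec_def)

lemma take_zerovec [simp]: "take i (zerovec m) = zerovec (min i m)"
  by (simp add: zerovec_def)

lemma drop_zerovec [simp]: "drop i (zerovec m) = zerovec (m - i)"
  by (simp add: zerovec_def)

lemma mem_vecs_iff [simp]: "v \<in> vecs m \<longleftrightarrow> length v = m"
  by (simp add: vecs_def)

lemma finite_vecs [simp]: "finite (vecs m)"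
  using finite_lists_length_eq[of "UNIV :: bool set" m] by (simp add: vecs_def)

lemma card_vecs: "card (vecs m) = 2 ^ m"
  using card_lists_length_eq[of "UNIV :: bool set" m] by (simp add: vecs_def)

lemma vadd_assoc: "vadd (vadd u v) w = vadd u (vadd v w)"
  by (rule nth_equalityI) auto

lemma vadd_self: "vadd u u = zerovec (length u)"
  by (rule nth_equalityI) auto

lemma vadd_zerovec: "length u = m \<Longrightarrow> vadd u (zerovec m) = u"
  by (rule nth_equalityI) auto

lemma zerovec_vadd: "length u = m \<Longrightarrow> vadd (zerovec m) u = u"
  by (rule nth_equalityI) auto

lemma vadd_eq_zerovec_iff: "length u = m \<Longrightarrow> length v = m \<Longrightarrow> vadd u v = zerovec m \<longleftrightarrow> u = v"
proof
  assume uv: "vadd u v = zerovec m" and "length u = m" "length v = m"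
  show "u = v"
  proof (rule nth_equalityI)
    fix i assume "i < length u"
    moreover have "vadd u v ! i = zerovec m ! i"
      using uv by simp
    ultimately show "u ! i = v ! i"
      using \<open>length u = m\<close> \<open>length v = m\<close> by auto
  qed (simp add: \<open>length u = m\<close> \<open>length v = m\<close>)
qed (simp add: vadd_self)

lemma vadd_eq_vadd_swap:
  assumes "length a = m" "length a' = m" "length e = m" "length e' = m" "vadd a e = vadd a' e'"
  shows "vadd a a' = vadd e e'"
proof (rule nth_equalityI)
  fix i assume "i < length (vadd a a')"
  moreover have "vadd a e ! i = vadd a' e' ! i"
    using assms(5) by simp
  ultimately show "vadd a a' ! i = vadd e e' ! i"
    using assms(1-4) by auto
qed (use assms in simp)

lemma dotp_Cons [simp]: "dotp (a # u) (b # v) = ((a \<and> b) \<noteq> dotp u v)"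
  by (cases a; cases b) (simp_all add: dotp_def)

lemma dotp_Nil [simp]: "dotp [] v = False" "dotp u [] = False"
  by (simp_all add: dotp_def)

lemma dotp_commute: "dotp u v = dotp v u"
proof (induction u arbitrary: v)
  case (Cons a u) then show ?case by (cases v) auto
qed simp

lemma dotp_vadd_left:
  "length u = length v \<Longrightarrow> length u' = length v \<Longrightarrow> dotp (vadd u u') v = (dotp u v \<noteq> dotp u' v)"
proof (induction u arbitrary: u' v)
  case (Cons a u) then show ?case by (cases u'; cases v) auto
qed simp

lemma dotp_vadd_right:
  "length v = length u \<Longrightarrow> length v' = length u \<Longrightarrow> dotp u (vadd v v') = (dotp u v \<noteq> dotp u v')"
  by (simp add: dotp_commute[of u] dotp_vadd_left)

lemma dotp_eq_card: "dotp u v = odd (card {i. i < length u \<and> i < length v \<and> u ! i \<and> v ! i})"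
proof -
  have "{i. i < length u \<and> i < length v \<and> map2 (\<and>) u v ! i}
      = {i. i < length u \<and> i < length v \<and> u ! i \<and> v ! i}"
    by auto
  then show ?thesis unfolding dotp_def by (simp add: length_filter_conv_card)
qed

lemma dotp_zerovec [simp]: "\<not> dotp u (zerovec m)" "\<not> dotp (zerovec m) u"
proof -
  show "\<not> dotp u (zerovec m)" for u
    unfolding zerovec_def
  proof (induction u arbitrary: m)
    case (Cons a u) then show ?case by (cases m) auto
  qed simp
  then show "\<not> dotp (zerovec m) u"
    by (simp add: dotp_commute)
qed

lemma symp_commute: "symp n u v = symp n v u"
  unfolding symp_def by auto

lemma symp_self [simp]: "\<not> symp n u u"
  unfolding symp_def by auto

lemma symp_vadd_left:
  "length u = 2 * n \<Longrightarrow> length u' = 2 * n \<Longrightarrow> length v = 2 * n \<Longrightarrow>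
   symp n (vadd u u') v = (symp n u v \<noteq> symp n u' v)"
  unfolding symp_def take_vadd drop_vadd
  by (simp add: dotp_vadd_left dotp_vadd_right) auto

lemma symp_vadd_right:
  "length u = 2 * n \<Longrightarrow> length u' = 2 * n \<Longrightarrow> length v = 2 * n \<Longrightarrow>
   symp n v (vadd u u') = (symp n v u \<noteq> symp n v u')"
  using symp_vadd_left[of u n u' v] by (simp add: symp_commute)

lemma symp_zerovec [simp]: "length v = 2 * n \<Longrightarrow> \<not> symp n (zerovec (2 * n)) v"
  by (simp add: symp_def)

section \<open>Symplectic transvections\<close>

definition transvection :: "nat \<Rightarrow> vec \<Rightarrow> vec \<Rightarrow> vec" where
  "transvection n v x = (if symp n x v then vadd x v else x)"

lemma length_transvection [simp]:
  "length x = 2 * n \<Longrightarrow> length v = 2 * n \<Longrightarrow> length (transvection n v x) = 2 * n"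
  by (simp add: transvection_def)

lemma transvection_vadd:
  "length x = 2 * n \<Longrightarrow> length y = 2 * n \<Longrightarrow> length v = 2 * n \<Longrightarrow>
   transvection n v (vadd x y) = vadd (transvection n v x) (transvection n v y)"
  unfolding transvection_def symp_vadd_left
  by (auto intro!: nth_equalityI)

lemma transvection_zerovec [simp]: "length v = 2 * n \<Longrightarrow> transvection n v (zerovec (2 * n)) = zerovec (2 * n)"
  by (simp add: transvection_def)

lemma symp_transvection:
  "length x = 2 * n \<Longrightarrow> length y = 2 * n \<Longrightarrow> length v = 2 * n \<Longrightarrow>
   symp n (transvection n v x) (transvection n v y) = symp n x y"
  unfolding transvection_def
  by (auto simp: symp_vadd_left symp_vadd_right symp_commute[of n v x] symp_commute[of n v y])

lemma transvection_transvection [simp]: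
  "length x = 2 * n \<Longrightarrow> length v = 2 * n \<Longrightarrow> transvection n v (transvection n v x) = x"
  unfolding transvection_def
  by (auto simp: symp_vadd_left vadd_assoc vadd_self vadd_zerovec)

lemma transvection_vadd_maps:
  "length u = 2 * n \<Longrightarrow> length w = 2 * n \<Longrightarrow> symp n u w \<Longrightarrow> transvection n (vadd u w) u = w"
  unfolding transvection_def
  by (auto simp: symp_vadd_right intro!: nth_equalityI)

definition unitv :: "nat \<Rightarrow> nat \<Rightarrow> vec" where
  "unitv m i = map (\<lambda>j. j = i) [0..<m]"

lemma length_unitv [simp]: "length (unitv m i) = m"
  by (simp add: unitv_def)

lemma nth_unitv [simp]: "j < m \<Longrightarrow> unitv m i ! j = (j = i)"
  by (simp add: unitv_def)

lemma dotp_unitv: "length a = m \<Longrightarrow> i < m \<Longrightarrow> dotp a (unitv m i) = a ! i"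
proof -
  assume "length a = m" "i < m"
  then have "{j. j < length a \<and> j < length (unitv m i) \<and> a ! j \<and> unitv m i ! j} = (if a ! i then {i} else {})"
    by auto
  then show ?thesis
    unfolding dotp_eq_card by simp
qed

lemma ex_symp_nonzero:
  assumes u: "length u = 2 * n" and nz: "u \<noteq> zerovec (2 * n)"
  obtains z where "length z = 2 * n" "symp n u z"
proof -
  have "\<exists>i < 2 * n. u ! i"
  proof (rule ccontr)
    assume "\<not> (\<exists>i < 2 * n. u ! i)"
    then have "u = zerovec (2 * n)"
      using u by (intro nth_equalityI) auto
    with nz show False ..
  qed
  then obtain i where i: "i < 2 * n" "u ! i"
    by blast
  show ?thesis
  proof (cases "i < n")
    case True
    have "symp n u (zerovec n @ unitv n i)"
      using u i True by (simp add: symp_def dotp_unitv)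
    then show ?thesis using that by (metis length_append length_unitv length_zerovec mult_2)
  next
    case False
    have "symp n u (unitv n (i - n) @ zerovec n)"
      using u i False by (simp add: symp_def dotp_commute[of "unitv n _"] dotp_unitv)
    then show ?thesis using that by (metis length_append length_unitv length_zerovec mult_2)
  qed
qed

lemma ex_symp_both:
  assumes "length u = 2 * n" "u \<noteq> zerovec (2 * n)" "length w = 2 * n" "w \<noteq> zerovec (2 * n)"
  obtains z where "length z = 2 * n" "symp n u z" "symp n w z"
proof -
  obtain z1 where z1: "length z1 = 2 * n" "symp n u z1"
    using ex_symp_nonzero assms(1,2) by blast
  obtain z2 where z2: "length z2 = 2 * n" "symp n w z2"
    using ex_symp_nonzero assms(3,4) by blast
  consider "symp n w z1" | "symp n u z2" | "\<not> symp n w z1" "\<not> symp n u z2"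
    by blast
  then show ?thesis
  proof cases
    case 3
    then show ?thesis
      using that[of "vadd z1 z2"] z1 z2 assms by (simp add: symp_vadd_right)
  qed (use that z1 z2 in auto)
qed

lemma mat_vec_Nil [simp]: "mat_vec m [] x = zerovec m" "mat_vec m M [] = zerovec m"
  by (simp_all add: mat_vec_def)

lemma mat_vec_Cons [simp]:
  "mat_vec m (c # M) (b # x) = (if b then vadd c (mat_vec m M x) else mat_vec m M x)"
  by (simp add: mat_vec_def)

lemma length_mat_vec [simp]: "\<forall>c\<in>set M. length c = m \<Longrightarrow> length (mat_vec m M x) = m"
proof (induction M arbitrary: x)
  case (Cons c M) then show ?case by (cases x) auto
qed simp

lemma mat_vec_map_linear:
  assumes "\<And>a b. length a = m \<Longrightarrow> length b = m \<Longrightarrow> T (vadd a b) = vadd (T a) (T b)"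
    and "T (zerovec m) = zerovec m" and "\<forall>c\<in>set M. length c = m"
  shows "mat_vec m (map T M) x = T (mat_vec m M x)"
  using assms(3)
proof (induction M arbitrary: x)
  case (Cons c M) then show ?case using assms(1,2) by (cases x) auto
qed (simp add: assms(2))

lemma mat_vec_append:
  "length A = length r \<Longrightarrow> \<forall>c\<in>set (A @ B). length c = m \<Longrightarrow>
   mat_vec m (A @ B) (r @ y) = vadd (mat_vec m A r) (mat_vec m B y)"
proof (induction A r rule: list_induct2)
  case Nil then show ?case by (simp add: zerovec_vadd)
next
  case (Cons c A b r) then show ?case by (auto simp: vadd_assoc)
qed

lemma mat_vec_nth:
  "\<forall>c\<in>set M. length c = m \<Longrightarrow> i < m \<Longrightarrow> mat_vec m M x ! i = dotp (map (\<lambda>c. c ! i) M) x"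
proof (induction M arbitrary: x)
  case (Cons c M) then show ?case by (cases x) auto
qed simp

lemma mat_vec_vadd:
  assumes "length x = length M" "length x' = length M" "\<forall>c\<in>set M. length c = m"
  shows "mat_vec m M (vadd x x') = vadd (mat_vec m M x) (mat_vec m M x')"
  using assms by (intro nth_equalityI) (simp_all add: mat_vec_nth dotp_vadd_right)

lemma mat_vec_transvection:
  "length v = 2 * n \<Longrightarrow> \<forall>c\<in>set M. length c = 2 * n \<Longrightarrow>
   mat_vec (2 * n) (map (transvection n v) M) x = transvection n v (mat_vec (2 * n) M x)"
  by (rule mat_vec_map_linear) (auto simp: transvection_vadd)

lemma lsn_instances_columns_length:
  "I \<in> lsn_instances n k \<Longrightarrow> \<forall>c\<in>set (fst I @ snd I). length c = 2 * n"
  by (auto simp: lsn_instances_def mats_def)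

lemma encode_eq_vadd_mat_vec:
  assumes "I \<in> lsn_instances n k" "length r = n"
  shows "encode n I r y e = vadd (mat_vec (2 * n) (fst I @ snd I) (r @ y)) e"
proof -
  have "length (fst I) = length r"
    using assms by (auto simp: lsn_instances_def mats_def)
  then show ?thesis
    unfolding encode_def using mat_vec_append lsn_instances_columns_length[OF assms(1)] by metis
qed

section \<open>Nontrivial codewords of a random instance\<close>

definition transvection_inst :: "nat \<Rightarrow> vec \<Rightarrow> inst \<Rightarrow> inst" where
  "transvection_inst n v I = (map (transvection n v) (fst I), map (transvection n v) (snd I))"

lemma transvection_inst_in_lsn_instances:
  assumes v: "length v = 2 * n" and I: "I \<in> lsn_instances n k"
  shows "transvection_inst n v I \<in> lsn_instances n k"
proof -
  obtain A B where AB: "I = (A, B)" "A \<in> mats (2 * n) n" "B \<in> mats (2 * n) k"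
    "isotropic n A" "isotropic n B" "col_indep (2 * n) (A @ B)"
    using I by (cases I) (auto simp: lsn_instances_def)
  let ?T = "transvection n v"
  have cols: "\<forall>c\<in>set (A @ B). length c = 2 * n"
    using AB by (auto simp: mats_def)
  have "col_indep (2 * n) (map ?T (A @ B))"
    unfolding col_indep_def
  proof (intro allI impI)
    fix x
    assume x: "length x = length (map ?T (A @ B)) \<and> mat_vec (2 * n) (map ?T (A @ B)) x = zerovec (2 * n)"
    then have "?T (mat_vec (2 * n) (A @ B) x) = zerovec (2 * n)"
      using mat_vec_transvection[OF v cols] by simp
    then have "mat_vec (2 * n) (A @ B) x = zerovec (2 * n)"
      using v cols by (metis transvection_transvection transvection_zerovec length_mat_vec)
    then show "x = zerovec (length (map ?T (A @ B)))"
      using AB(6) x unfolding col_indep_def by simp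
  qed
  moreover have "isotropic n (map ?T A)" "isotropic n (map ?T B)"
    using AB(2-5) v by (auto simp: isotropic_def mats_def symp_transvection)
  ultimately show ?thesis
    using AB(1-3) v by (simp add: transvection_inst_def lsn_instances_def mats_def)
qed

lemma transvection_inst_involutive:
  "length v = 2 * n \<Longrightarrow> I \<in> lsn_instances n k \<Longrightarrow> transvection_inst n v (transvection_inst n v I) = I"
  using lsn_instances_columns_length[of I n k] by (cases I) (auto simp: transvection_inst_def intro!: map_idI)

text \<open>The codewords \<open>A u + B v\<close> with \<open>v \<noteq> 0\<close>: a decoding error of the reduction is one of them.\<close>

definition nontriv_codewords :: "nat \<Rightarrow> nat \<Rightarrow> inst \<Rightarrow> vec set" where
  "nontriv_codewords n k I = (\<lambda>(u, v). mat_vec (2 * n) (fst I @ snd I) (u @ v)) `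
     {(u, v). length u = n \<and> length v = k \<and> v \<noteq> zerovec k}"

lemma nontriv_codewords_subset:
  "I \<in> lsn_instances n k \<Longrightarrow> nontriv_codewords n k I \<subseteq> vecs (2 * n)"
  using lsn_instances_columns_length[of I n k] by (auto simp: nontriv_codewords_def)

lemma card_nontriv_codewords_le: "card (nontriv_codewords n k I) \<le> 2 ^ (n + k)"
proof -
  have "card (nontriv_codewords n k I) \<le> card (vecs n \<times> vecs k)"
    unfolding nontriv_codewords_def
    by (rule surj_card_le) auto
  also have "\<dots> = 2 ^ (n + k)"
    by (simp add: card_vecs card_cartesian_product power_add)
  finally show ?thesis .
qed

lemma mem_nontriv_codewords_transvection_inst:
  assumes v: "length v = 2 * n" and I: "I \<in> lsn_instances n k" and w: "length w = 2 * n"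
  shows "w \<in> nontriv_codewords n k (transvection_inst n v I) \<longleftrightarrow>
         transvection n v w \<in> nontriv_codewords n k I"
proof -
  let ?T = "transvection n v"
  have "nontriv_codewords n k (transvection_inst n v I) = ?T ` nontriv_codewords n k I"
    unfolding nontriv_codewords_def transvection_inst_def image_image
    using mat_vec_transvection[OF v lsn_instances_columns_length[OF I]] by (simp add: case_prod_beta)
  moreover have "?T ` nontriv_codewords n k I = {w \<in> vecs (2 * n). ?T w \<in> nontriv_codewords n k I}"
    using nontriv_codewords_subset[OF I] v by (auto intro: rev_image_eqI[of "?T _"])
  ultimately show ?thesis
    using w by simp
qed

definition count_instances :: "nat \<Rightarrow> nat \<Rightarrow> vec \<Rightarrow> nat" where
  "count_instances n k w = card {I \<in> lsn_instances n k. w \<in> nontriv_codewords n k I}"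

lemma count_instances_transvection:
  assumes v: "length v = 2 * n" and w: "length w = 2 * n"
  shows "count_instances n k (transvection n v w) = count_instances n k w"
proof -
  let ?\<Phi> = "transvection_inst n v"
  have "bij_betw ?\<Phi> {I \<in> lsn_instances n k. w \<in> nontriv_codewords n k I}
                   {I \<in> lsn_instances n k. transvection n v w \<in> nontriv_codewords n k I}"
    by (rule bij_betw_byWitness[of _ ?\<Phi>])
       (auto simp: transvection_inst_involutive transvection_inst_in_lsn_instances
          mem_nontriv_codewords_transvection_inst v w)
  then show ?thesis
    unfolding count_instances_def by (simp add: bij_betw_same_card)
qed

text \<open>The symplectic group acts transitively on nonzero vectors, and it permutes
  the instances; so every nonzero vector is a nontrivial codeword equally often.\<close>

lemma count_instances_eq:
  assumes "length u = 2 * n" "u \<noteq> zerovec (2 * n)" "length w = 2 * n" "w \<noteq> zerovec (2 * n)"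
  shows "count_instances n k u = count_instances n k w"
proof -
  obtain z where z: "length z = 2 * n" "symp n u z" "symp n w z"
    using ex_symp_both[OF assms] .
  have "count_instances n k u = count_instances n k z"
    using count_instances_transvection[of "vadd u z" n u k] transvection_vadd_maps[of u n z] z assms(1)
    by simp
  also have "\<dots> = count_instances n k w"
    using count_instances_transvection[of "vadd w z" n w k] transvection_vadd_maps[of w n z] z assms(3)
    by simp
  finally show ?thesis .
qed

lemma finite_mats: "finite (mats m c)"
proof -
  have "mats m c = {M. set M \<subseteq> vecs m \<and> length M = c}"
    by (auto simp: mats_def)
  then show ?thesis
    using finite_lists_length_eq[OF finite_vecs] by simp
qed

lemma finite_lsn_instances: "finite (lsn_instances n k)"
proof (rule finite_subset)
  show "lsn_instances n k \<subseteq> mats (2 * n) n \<times> mats (2 * n) k"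
    by (auto simp: lsn_instances_def)
qed (simp add: finite_mats)

lemma count_instances_le:
  assumes "length w = 2 * n" "w \<noteq> zerovec (2 * n)"
  shows "count_instances n k w * (4 ^ n - 1) \<le> card (lsn_instances n k) * 2 ^ (n + k)"
proof -
  let ?L = "lsn_instances n k" and ?V = "vecs (2 * n)" and ?S = "nontriv_codewords n k"
  have count_eq_sum: "count_instances n k w' = (\<Sum>I\<in>?L. of_bool (w' \<in> ?S I))" for w'
  proof -
    have "{I \<in> ?L. w' \<in> ?S I} = ?L \<inter> {I. w' \<in> ?S I}"
      by blast
    then show ?thesis
      by (simp add: count_instances_def finite_lsn_instances)
  qed
  have "card (?V - {zerovec (2 * n)}) = 4 ^ n - 1"
    by (simp add: card_vecs power_mult)
  then have "count_instances n k w * (4 ^ n - 1) = (\<Sum>w'\<in>?V - {zerovec (2 * n)}. count_instances n k w)"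
    by simp
  also have "\<dots> = (\<Sum>w'\<in>?V - {zerovec (2 * n)}. count_instances n k w')"
    by (intro sum.cong refl count_instances_eq[OF _ _ assms, symmetric]) auto
  also have "\<dots> \<le> (\<Sum>w'\<in>?V. count_instances n k w')"
    by (rule sum_mono2) auto
  also have "\<dots> = (\<Sum>I\<in>?L. \<Sum>w'\<in>?V. of_bool (w' \<in> ?S I))"
    unfolding count_eq_sum by (rule sum.swap)
  also have "\<dots> = (\<Sum>I\<in>?L. card (?S I))"
  proof (rule sum.cong)
    fix I assume "I \<in> ?L"
    then have "?V \<inter> {w'. w' \<in> ?S I} = ?S I"
      using nontriv_codewords_subset by blast
    then show "(\<Sum>w'\<in>?V. of_bool (w' \<in> ?S I)) = card (?S I)"
      by simp
  qed simp
  also have "\<dots> \<le> card ?L * 2 ^ (n + k)"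
    using sum_bounded_above[of ?L "\<lambda>I. card (?S I)"] card_nontriv_codewords_le by simp
  finally show ?thesis .
qed

lemma take_unitv_zerovec: "n \<le> i \<Longrightarrow> take n (unitv m i) = zerovec (min n m)"
  by (rule nth_equalityI) auto

lemma drop_unitv_zerovec: "i < n \<Longrightarrow> drop n (unitv m i) = zerovec (m - n)"
  by (rule nth_equalityI) auto

lemma lsn_instances_nonempty:
  assumes "k \<le> n"
  shows "lsn_instances n k \<noteq> {}"
proof -
  let ?A = "map (unitv (2 * n)) [0..<n]" and ?B = "map (unitv (2 * n)) [n..<n + k]"
  have units_isotropic: "isotropic n (map (unitv (2 * n)) is)"
    if "(\<forall>i\<in>set is. i < n) \<or> (\<forall>i\<in>set is. n \<le> i)" for "is"
    using that by (auto simp: isotropic_def symp_def take_unitv_zerovec drop_unitv_zerovec)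
  have "col_indep (2 * n) (?A @ ?B)"
    unfolding col_indep_def
  proof (intro allI impI)
    fix x assume x: "length x = length (?A @ ?B) \<and> mat_vec (2 * n) (?A @ ?B) x = zerovec (2 * n)"
    have AB: "?A @ ?B = map (unitv (2 * n)) [0..<n + k]"
      by (simp add: upt_add_eq_append[of 0 n k] del: upt_add_eq_append)
    have "\<not> x ! j" if j: "j < n + k" for j
    proof -
      have j2: "j < 2 * n"
        using j assms by simp
      have col: "map (\<lambda>c. c ! j) (?A @ ?B) = unitv (n + k) j"
        using j2 unfolding AB by (auto simp: unitv_def)
      have "mat_vec (2 * n) (?A @ ?B) x ! j = dotp (map (\<lambda>c. c ! j) (?A @ ?B)) x"
        by (rule mat_vec_nth) (use j2 in auto)
      also have "\<dots> = x ! j"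
        unfolding col using j x by (simp add: dotp_commute[of "unitv _ _"] dotp_unitv)
      finally show ?thesis
        using x j assms by simp
    qed
    then show "x = zerovec (length (?A @ ?B))"
      using x by (intro nth_equalityI) auto
  qed
  then have "(?A, ?B) \<in> lsn_instances n k"
    using units_isotropic by (auto simp: lsn_instances_def mats_def)
  then show ?thesis
    by blast
qed

lemma set_pmf_Gen: "k \<le> n \<Longrightarrow> set_pmf (Gen n k) = lsn_instances n k"
  by (simp add: Gen_def lsn_instances_nonempty finite_lsn_instances)

lemma prob_mem_nontriv_codewords_le:
  assumes "k \<le> n" "length w = 2 * n" "w \<noteq> zerovec (2 * n)"
  shows "measure (Gen n k) {I. w \<in> nontriv_codewords n k I} \<le> 2 ^ (n + k) / (4 ^ n - 1)"
proof -
  let ?L = "lsn_instances n k"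
  have "n > 0"
    using assms(2,3) by (cases n) auto
  then have pos: "(4::real) ^ n - 1 > 0"
    by (simp add: one_less_power)
  have L: "?L \<noteq> {}" "finite ?L"
    using assms(1) by (simp_all add: lsn_instances_nonempty finite_lsn_instances)
  have "real (count_instances n k w * (4 ^ n - 1)) \<le> real (card ?L * 2 ^ (n + k))"
    using count_instances_le[OF assms(2,3)] by (rule of_nat_mono)
  then have count: "real (count_instances n k w) * (4 ^ n - 1) \<le> real (card ?L) * 2 ^ (n + k)"
    by (simp add: of_nat_diff)
  have "measure (Gen n k) {I. w \<in> nontriv_codewords n k I} = real (count_instances n k w) / card ?L"
    using L by (simp add: Gen_def measure_pmf_of_set count_instances_def Int_def conj_commute)
  also have "\<dots> \<le> 2 ^ (n + k) / (4 ^ n - 1)"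
    using count pos L by (simp add: field_simps card_gt_0_iff)
  finally show ?thesis .
qed

definition light_vecs :: "nat \<Rightarrow> real \<Rightarrow> vec set" where
  "light_vecs n d = {w \<in> vecs (2 * n). w \<noteq> zerovec (2 * n) \<and> real (weight n w) \<le> d}"

definition has_light_codeword :: "nat \<Rightarrow> nat \<Rightarrow> real \<Rightarrow> inst \<Rightarrow> bool" where
  "has_light_codeword n k d I \<longleftrightarrow> nontriv_codewords n k I \<inter> light_vecs n d \<noteq> {}"

lemma prob_has_light_codeword_le:
  assumes "k \<le> n"
  shows "measure (Gen n k) {I. has_light_codeword n k d I}
    \<le> real (card (light_vecs n d)) * 2 ^ (n + k) / (4 ^ n - 1)"
proof -
  have fin: "finite (light_vecs n d)"
    by (rule finite_subset[OF _ finite_vecs]) (auto simp: light_vecs_def)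
  have "{I. has_light_codeword n k d I} = (\<Union>w\<in>light_vecs n d. {I. w \<in> nontriv_codewords n k I})"
    by (auto simp: has_light_codeword_def)
  then have "measure (Gen n k) {I. has_light_codeword n k d I}
      \<le> (\<Sum>w\<in>light_vecs n d. measure (Gen n k) {I. w \<in> nontriv_codewords n k I})"
    using measure_pmf.finite_measure_subadditive_finite[OF fin] by simp
  also have "\<dots> \<le> (\<Sum>w\<in>light_vecs n d. 2 ^ (n + k) / (4 ^ n - 1))"
    using assms by (intro sum_mono prob_mem_nontriv_codewords_le) (auto simp: light_vecs_def)
  finally show ?thesis
    by simp
qed

section \<open>Counting light vectors\<close>

definition vec_of_pairs :: "(bool \<times> bool) list \<Rightarrow> vec" where
  "vec_of_pairs ps = map fst ps @ map snd ps"

lemma weight_vec_of_pairs: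
  assumes "length ps = n"
  shows "weight n (vec_of_pairs ps) = length (filter (\<lambda>q. q \<noteq> (False, False)) ps)"
proof -
  have "{j. j < n \<and> (vec_of_pairs ps ! j \<or> vec_of_pairs ps ! (n + j))}
      = {j. j < length ps \<and> ps ! j \<noteq> (False, False)}"
    using assms by (auto simp: vec_of_pairs_def nth_append) (metis prod.collapse)+
  then show ?thesis
    by (simp add: weight_def length_filter_conv_card)
qed

lemma bij_betw_vec_of_pairs: "bij_betw vec_of_pairs {ps. length ps = n} (vecs (2 * n))"
proof (rule bij_betw_byWitness[where f' = "\<lambda>w. zip (take n w) (drop n w)"])
  show "vec_of_pairs ` {ps. length ps = n} \<subseteq> vecs (2 * n)"
    by (auto simp: vec_of_pairs_def)
qed (auto simp: vec_of_pairs_def zip_map_fst_snd)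

lemma power_length_filter:
  "x ^ length (filter P xs) = prod_list (map (\<lambda>a. if P a then x else 1) xs)"
  by (induction xs) auto

lemma sum_lists_length_prod_list:
  fixes f :: "'a::finite \<Rightarrow> 'b::comm_semiring_1"
  shows "(\<Sum>xs | length xs = n. prod_list (map f xs)) = (\<Sum>a\<in>UNIV. f a) ^ n"
proof (induction n)
  case (Suc n)
  have lists: "{xs. length xs = Suc n} = (\<lambda>(a, xs). a # xs) ` (UNIV \<times> {xs. length xs = n})"
    by (auto simp: length_Suc_conv)
  have "inj_on (\<lambda>(a, xs). a # xs) (UNIV \<times> {xs :: 'a list. length xs = n})"
    by (auto intro: inj_onI)
  then have "(\<Sum>xs | length xs = Suc n. prod_list (map f xs))
      = (\<Sum>q\<in>UNIV \<times> {xs. length xs = n}. prod_list (map f ((\<lambda>(a, xs). a # xs) q)))"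
    unfolding lists by (rule sum.reindex[unfolded comp_def])
  also have "\<dots> = (\<Sum>(a, xs)\<in>UNIV \<times> {xs. length xs = n}. f a * prod_list (map f xs))"
    by (intro sum.cong) auto
  also have "\<dots> = (\<Sum>a\<in>UNIV. f a) * (\<Sum>xs | length xs = n. prod_list (map f xs))"
    by (simp add: sum.cartesian_product[symmetric] sum_product)
  finally show ?case
    using Suc.IH by simp
qed simp

lemma UNIV_bool_pairs:
  "(UNIV :: (bool \<times> bool) set) = {(False, False), (False, True), (True, False), (True, True)}"
  by auto

lemma sum_power_weight: "(\<Sum>w\<in>vecs (2 * n). (x::real) ^ weight n w) = (1 + 3 * x) ^ n"
proof -
  have "(\<Sum>w\<in>vecs (2 * n). x ^ weight n w) = (\<Sum>ps | length ps = n. x ^ weight n (vec_of_pairs ps))"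
    by (rule sum.reindex_bij_betw[OF bij_betw_vec_of_pairs, symmetric])
  also have "\<dots> = (\<Sum>ps | length ps = n. prod_list (map (\<lambda>q. if q \<noteq> (False, False) then x else 1) ps))"
    by (simp add: weight_vec_of_pairs power_length_filter)
  also have "\<dots> = (1 + 3 * x) ^ n"
    by (simp add: sum_lists_length_prod_list UNIV_bool_pairs)
  finally show ?thesis .
qed

lemma card_light_vecs_le:
  assumes "0 < x" "x \<le> 1"
  shows "real (card (light_vecs n d)) \<le> x powr (- d) * (1 + 3 * x) ^ n"
proof -
  have "real (card (light_vecs n d)) = (\<Sum>w\<in>light_vecs n d. 1)"
    by simp
  also have "\<dots> \<le> (\<Sum>w\<in>light_vecs n d. x powr (real (weight n w) - d))"
    using assms powr_mono2'[of _ x 1] by (intro sum_mono) (auto simp: light_vecs_def)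
  also have "\<dots> \<le> (\<Sum>w\<in>vecs (2 * n). x powr (real (weight n w) - d))"
    by (rule sum_mono2) (auto simp: light_vecs_def)
  also have "\<dots> = x powr (- d) * (\<Sum>w\<in>vecs (2 * n). x ^ weight n w)"
    using assms by (simp add: sum_distrib_left powr_diff powr_minus_divide powr_realpow divide_simps)
  finally show ?thesis
    by (simp add: sum_power_weight)
qed

section \<open>Tail bound for the noise weight\<close>

lemma set_pmf_noise_pairs: "set_pmf (noise_pairs p n) \<subseteq> {ps. length ps = n}"
  by (induction n) auto

lemma set_pmf_noise: "set_pmf (noise p n) \<subseteq> vecs (2 * n)"
  using set_pmf_noise_pairs[of p n] by (auto simp: noise_def)

lemma finite_set_pmf_noise: "finite (set_pmf (noise p n))"
  using finite_subset[OF set_pmf_noise finite_vecs] .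

lemma pmf_noise_pairs:
  "length ps = n \<Longrightarrow> pmf (noise_pairs p n) ps = prod_list (map (pmf (pauli_pmf p)) ps)"
proof (induction n arbitrary: ps)
  case (Suc n)
  then obtain a qs where ps: "ps = a # qs" and qs: "length qs = n"
    by (cases ps) auto
  have "pmf (map_pmf ((#) q) (noise_pairs p n)) (a # qs) = of_bool (q = a) * pmf (noise_pairs p n) qs" for q
    by (cases "q = a") (simp_all add: pmf_map_inj' pmf_map_outside image_iff)
  then have "pmf (noise_pairs p (Suc n)) ps = (\<integral>q. of_bool (q = a) * pmf (noise_pairs p n) qs \<partial>pauli_pmf p)"
    by (simp add: ps pmf_bind)
  also have "\<dots> = pmf (pauli_pmf p) a * pmf (noise_pairs p n) qs"
    by (subst integral_measure_pmf_real[of "{a}"]) auto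
  finally show ?case
    using Suc.IH[OF qs] ps by simp
qed simp

lemma pmf_pauli_pmf_no_error: "0 \<le> p \<Longrightarrow> p \<le> 1 \<Longrightarrow> pmf (pauli_pmf p) (False, False) = 1 - p"
  by (simp add: pauli_pmf_def pmf_bind)

lemma expectation_noise:
  "measure_pmf.expectation (noise p n) g = (\<Sum>ps | length ps = n. g (vec_of_pairs ps) * pmf (noise_pairs p n) ps)"
proof -
  have "measure_pmf.expectation (noise p n) g = measure_pmf.expectation (noise_pairs p n) (\<lambda>ps. g (vec_of_pairs ps))"
    by (simp add: noise_def vec_of_pairs_def)
  also have "\<dots> = (\<Sum>ps | length ps = n. g (vec_of_pairs ps) * pmf (noise_pairs p n) ps)"
    using set_pmf_noise_pairs finite_lists_length_eq[of "UNIV :: (bool \<times> bool) set" n]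
    by (intro integral_measure_pmf_real) auto
  finally show ?thesis .
qed

lemma prod_list_map_mult:
  "prod_list (map (\<lambda>x. f x * g x) xs) = prod_list (map f xs) * (prod_list (map g xs) :: 'a::comm_monoid_mult)"
  by (induction xs) (simp_all add: ac_simps)

lemma expectation_power_weight:
  assumes "0 \<le> p" "p \<le> 1"
  shows "measure_pmf.expectation (noise p n) (\<lambda>e. y ^ weight n e) = (1 - p + p * y) ^ n"
proof -
  let ?f = "\<lambda>q. (if q \<noteq> (False, False) then y else 1) * pmf (pauli_pmf p) q"
  let ?P = "pmf (pauli_pmf p)"
  have "(\<Sum>q\<in>UNIV. ?P q) = 1"
    by (rule sum_pmf_eq_1) auto
  then have "?P (False, True) + ?P (True, False) + ?P (True, True) = p"
    using pmf_pauli_pmf_no_error[OF assms] by (simp add: UNIV_bool_pairs)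
  moreover have "(\<Sum>q\<in>UNIV. ?f q)
      = ?P (False, False) + y * (?P (False, True) + ?P (True, False) + ?P (True, True))"
    by (simp add: UNIV_bool_pairs algebra_simps)
  ultimately have "(\<Sum>q\<in>UNIV. ?f q) = 1 - p + p * y"
    using pmf_pauli_pmf_no_error[OF assms] by simp
  moreover have "y ^ weight n (vec_of_pairs ps) * pmf (noise_pairs p n) ps = prod_list (map ?f ps)"
    if "length ps = n" for ps
    using that by (simp add: weight_vec_of_pairs power_length_filter pmf_noise_pairs prod_list_map_mult)
  ultimately show ?thesis
    by (simp add: expectation_noise sum_lists_length_prod_list)
qed

lemma prob_weight_gt_le:
  assumes "0 \<le> p" "p \<le> 1" "1 \<le> y"
  shows "measure (noise p n) {e. real (weight n e) > t} \<le> y powr (- t) * (1 - p + p * y) ^ n"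
proof -
  have "measure (noise p n) {e. real (weight n e) > t}
      = measure_pmf.expectation (noise p n) (indicator {e. real (weight n e) > t})"
    by simp
  also have "\<dots> \<le> measure_pmf.expectation (noise p n) (\<lambda>e. y powr (- t) * y ^ weight n e)"
  proof (intro integral_mono_AE integrable_measure_pmf_finite finite_set_pmf_noise AE_pmfI)
    fix e
    have "1 \<le> y powr (real (weight n e) - t)" if "real (weight n e) > t"
      using that assms(3) by (intro ge_one_powr_ge_zero) auto
    then show "indicator {e. real (weight n e) > t} e \<le> y powr (- t) * y ^ weight n e"
      using assms(3) by (auto simp: indicator_def powr_diff powr_minus_divide powr_realpow divide_simps)
  qed
  also have "\<dots> = y powr (- t) * (1 - p + p * y) ^ n"
    using assms by (simp add: expectation_power_weight)
  finally show ?thesis .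
qed

section \<open>The entropy estimate\<close>

lemma H2_nonneg:
  assumes "0 < x" "x < 1"
  shows "0 \<le> H2 x"
proof -
  have "x * log 2 x \<le> 0" "(1 - x) * log 2 (1 - x) \<le> 0"
    using assms by (simp_all add: mult_nonneg_nonpos)
  then show ?thesis
    unfolding H2_def by linarith
qed

lemma log2_3_ge: "3 / 2 \<le> log 2 (3::real)"
proof -
  have "log 2 ((2::real) ^ 3) \<le> log 2 (3 ^ 2)"
    by simp
  moreover have "log 2 ((2::real) ^ 3) = 3" "log 2 ((3::real) ^ 2) = 2 * log 2 3"
    by (simp_all only: log_nat_power) simp_all
  ultimately show ?thesis
    by linarith
qed

lemma one_plus_le_two_powr: "0 \<le> x \<Longrightarrow> 1 + x \<le> 2 powr (2 * (x::real))"
proof -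
  assume "0 \<le> x"
  have "1 + x \<le> exp 1 powr x"
    by (simp add: exp_powr_real)
  also have "\<dots> \<le> (2 powr 2) powr x"
    using exp_le \<open>0 \<le> x\<close> by (intro powr_mono2) auto
  finally show ?thesis
    by (simp only: powr_powr)
qed

text \<open>Choosing \<open>x = \<delta> / (3 (1 - \<delta>))\<close> in the Chernoff-type count of light vectors
  gives the entropy exponent \<open>H2 \<delta> + \<delta> log 3\<close> of the paper.\<close>

lemma entropy_exponent:
  assumes "0 < \<delta>" "\<delta> < 1"
  defines "x \<equiv> \<delta> / (3 * (1 - \<delta>))"
  shows "x powr (- (\<delta> * n)) * (1 + 3 * x) ^ n = 2 powr (n * (H2 \<delta> + \<delta> * log 2 3))"
proof -
  have x: "0 < x" and one_plus: "1 + 3 * x = 1 / (1 - \<delta>)"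
    using assms by (simp_all add: x_def field_simps)
  have "log 2 x = log 2 \<delta> - log 2 (3 * (1 - \<delta>))"
    unfolding x_def using assms by (intro log_divide_pos) auto
  moreover have "log 2 (3 * (1 - \<delta>)) = log 2 3 + log 2 (1 - \<delta>)"
    using assms by (intro log_mult_pos) auto
  ultimately have log_x: "log 2 x = log 2 \<delta> - log 2 3 - log 2 (1 - \<delta>)"
    by simp
  have "log 2 (x powr (- (\<delta> * n)) * (1 + 3 * x) ^ n) = - (\<delta> * n) * log 2 x + n * log 2 (1 + 3 * x)"
    using x by (simp add: log_mult log_powr log_nat_power)
  also have "\<dots> = n * (H2 \<delta> + \<delta> * log 2 3)"
    using assms unfolding log_x one_plus H2_def by (simp add: log_divide algebra_simps)
  finally have "2 powr log 2 (x powr (- (\<delta> * n)) * (1 + 3 * x) ^ n) = 2 powr (n * (H2 \<delta> + \<delta> * log 2 3))"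
    by simp
  then show ?thesis
    using x by simp
qed

lemma card_light_vecs_le_entropy:
  assumes "0 < \<delta>" "\<delta> \<le> 2 / 3" "0 \<le> s"
  shows "real (card (light_vecs n (\<delta> * n - s))) \<le> 2 powr (n * (H2 \<delta> + \<delta> * log 2 3)) * 2 powr (- s / 2)"
proof -
  define x where "x = \<delta> / (3 * (1 - \<delta>))"
  have x: "0 < x" "x \<le> 2 / 3"
    using assms by (auto simp: x_def field_simps)
  have "real (card (light_vecs n (\<delta> * n - s))) \<le> x powr (- (\<delta> * n - s)) * (1 + 3 * x) ^ n"
    using x by (intro card_light_vecs_le) auto
  also have "\<dots> = 2 powr (n * (H2 \<delta> + \<delta> * log 2 3)) * x powr s"
    using entropy_exponent[of \<delta> n] assms x(1) unfolding x_def[symmetric]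
    by (simp add: powr_diff powr_minus_divide divide_simps)
  also have "\<dots> \<le> 2 powr (n * (H2 \<delta> + \<delta> * log 2 3)) * (1 / sqrt 2) powr s"
  proof (intro mult_left_mono powr_mono2)
    have "sqrt 2 \<le> 3 / 2"
      by (rule real_le_lsqrt) (simp_all add: power2_eq_square)
    then have "x * sqrt 2 \<le> 2 / 3 * (3 / 2)"
      using x by (intro mult_mono) auto
    then show "x \<le> 1 / sqrt 2"
      by (simp add: field_simps)
  qed (use assms x in auto)
  also have "(1 / sqrt 2) powr s = 2 powr (- s / 2)"
    by (simp add: powr_divide powr_half_sqrt[symmetric] powr_powr powr_minus_divide)
  finally show ?thesis .
qed

lemma prob_has_light_codeword_le_powr:
  fixes n k :: nat and \<delta> s :: real
  assumes "0 < n" "k \<le> n" "0 < \<delta>" "\<delta> \<le> 2 / 3" "0 \<le> s"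
    and entropy: "H2 \<delta> + \<delta> * log 2 3 \<le> 1 - real k / real n"
  shows "measure (Gen n k) {I. has_light_codeword n k (\<delta> * real n - s) I} \<le> 2 * 2 powr (- s / 2)"
proof -
  have pos: "(4::real) ^ n - 1 > 0"
    using assms(1) by (simp add: one_less_power)
  have "real n * (1 - real k / real n) = real n - real k"
    using assms(1) by (simp add: field_simps)
  then have exponent: "n * (H2 \<delta> + \<delta> * log 2 3) \<le> real n - real k"
    using mult_left_mono[OF entropy, of n] by simp
  have "real (card (light_vecs n (\<delta> * real n - s))) \<le> 2 powr (n * (H2 \<delta> + \<delta> * log 2 3)) * 2 powr (- s / 2)"
    by (rule card_light_vecs_le_entropy[OF assms(3-5)])
  also have "\<dots> \<le> 2 powr (real n - real k) * 2 powr (- s / 2)"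
    using exponent by (intro mult_right_mono) auto
  finally have card:
    "real (card (light_vecs n (\<delta> * real n - s))) \<le> 2 powr (real n - real k) * 2 powr (- s / 2)" .
  have "measure (Gen n k) {I. has_light_codeword n k (\<delta> * real n - s) I}
      \<le> real (card (light_vecs n (\<delta> * real n - s))) * 2 ^ (n + k) / (4 ^ n - 1)"
    by (rule prob_has_light_codeword_le[OF assms(2)])
  also have "\<dots> \<le> 2 powr (real n - real k) * 2 powr (- s / 2) * 2 ^ (n + k) / (4 ^ n - 1)"
    using card pos by (intro divide_right_mono mult_right_mono) auto
  also have "\<dots> = 2 powr (- s / 2) * (4 ^ n / (4 ^ n - 1))"
    using assms(2) by (simp add: powr_diff powr_realpow power_add power_mult_distrib[symmetric])
  also have "\<dots> \<le> 2 powr (- s / 2) * 2"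
  proof (intro mult_left_mono)
    have "(4::real) ^ 1 \<le> 4 ^ n"
      using assms(1) by (intro power_increasing) auto
    then show "4 ^ n / (4 ^ n - 1) \<le> (2::real)"
      using pos by (simp add: field_simps)
  qed simp
  finally show ?thesis
    by simp
qed

lemma prob_weight_gt_le_powr:
  fixes n :: nat and p s :: real
  assumes "0 \<le> p" "p \<le> 1" "0 \<le> s"
  shows "measure (noise p n) {e. real (weight n e) > (2 * real n + s) * p} \<le> 2 powr (- s * p)"
proof -
  have "measure (noise p n) {e. real (weight n e) > (2 * real n + s) * p}
      \<le> 2 powr (- ((2 * real n + s) * p)) * (1 + p) ^ n"
    using prob_weight_gt_le[OF assms(1,2), of 2 n "(2 * real n + s) * p"] by (simp add: add.commute)
  also have "(1 + p) ^ n \<le> (2 powr (2 * p)) ^ n"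
    using assms(1) by (intro power_mono one_plus_le_two_powr) auto
  also have "\<dots> = 2 powr (2 * p * real n)"
    by (subst powr_realpow[symmetric]) (simp_all add: powr_powr)
  also have "2 powr (- ((2 * real n + s) * p)) * 2 powr (2 * p * real n) = 2 powr (- s * p)"
    by (simp add: powr_add[symmetric] algebra_simps)
  finally show ?thesis
    by (simp add: mult_left_mono)
qed

section \<open>Uniqueness of decoding and the reduction\<close>

lemma weight_vadd_le:
  assumes "length e = 2 * n" "length e' = 2 * n"
  shows "weight n (vadd e e') \<le> weight n e + weight n e'"
proof -
  let ?supp = "\<lambda>e. {j. j < n \<and> (e ! j \<or> e ! (n + j))}"
  have "?supp (vadd e e') \<subseteq> ?supp e \<union> ?supp e'"
    using assms by auto
  then have "weight n (vadd e e') \<le> card (?supp e \<union> ?supp e')"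
    unfolding weight_def by (intro card_mono) auto
  also have "\<dots> \<le> weight n e + weight n e'"
    unfolding weight_def by (rule card_Un_le)
  finally show ?thesis .
qed

text \<open>Two such encodings differ by a codeword of weight at most \<open>2 d\<close> with logical part
  \<open>y + y'\<close>; full rank makes it nonzero when \<open>y' \<noteq> y\<close>.\<close>

lemma encode_eq_imp_eq:
  assumes I: "I \<in> lsn_instances n k" and no_light: "\<not> has_light_codeword n k (2 * d) I"
    and lengths: "length r = n" "length y = k" "length e = 2 * n"
      "length r' = n" "length y' = k" "length e' = 2 * n"
    and light: "real (weight n e) \<le> d" "real (weight n e') \<le> d"
    and eq: "encode n I r' y' e' = encode n I r y e"
  shows "y' = y"
proof (rule ccontr)
  assume "y' \<noteq> y"
  let ?M = "fst I @ snd I" and ?u = "vadd r r'" and ?v = "vadd y y'" and ?w = "vadd e e'"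
  have cols: "\<forall>c\<in>set ?M. length c = 2 * n" and indep: "col_indep (2 * n) ?M"
    and len_M: "length ?M = n + k"
    using I by (auto simp: lsn_instances_def mats_def)
  have v: "length ?v = k" "?v \<noteq> zerovec k"
    using \<open>y' \<noteq> y\<close> lengths vadd_eq_zerovec_iff[of y k y'] by auto
  have "vadd (mat_vec (2 * n) ?M (r @ y)) e = encode n I r y e"
    by (rule encode_eq_vadd_mat_vec[OF I lengths(1), symmetric])
  also have "\<dots> = vadd (mat_vec (2 * n) ?M (r' @ y')) e'"
    unfolding eq[symmetric] by (rule encode_eq_vadd_mat_vec[OF I lengths(4)])
  finally have "vadd (mat_vec (2 * n) ?M (r @ y)) (mat_vec (2 * n) ?M (r' @ y')) = ?w"
    by (rule vadd_eq_vadd_swap[rotated 4]) (simp_all add: cols lengths)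
  moreover have "mat_vec (2 * n) ?M (vadd (r @ y) (r' @ y'))
      = vadd (mat_vec (2 * n) ?M (r @ y)) (mat_vec (2 * n) ?M (r' @ y'))"
    using cols lengths len_M by (intro mat_vec_vadd) auto
  moreover have "vadd (r @ y) (r' @ y') = ?u @ ?v"
    using lengths by (simp add: vadd_append)
  ultimately have w: "mat_vec (2 * n) ?M (?u @ ?v) = ?w"
    by simp
  have "?w \<in> nontriv_codewords n k I"
    unfolding nontriv_codewords_def using w v lengths by (intro image_eqI[of _ _ "(?u, ?v)"]) auto
  moreover have "?w \<noteq> zerovec (2 * n)"
  proof
    assume "?w = zerovec (2 * n)"
    then have "?u @ ?v = zerovec (n + k)"
      using indep w lengths len_M unfolding col_indep_def by auto
    then show False
      using v lengths by (metis append_eq_conv_conj drop_zerovec add_diff_cancel_left' length_vadd min.idem)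
  qed
  moreover have "real (weight n ?w) \<le> 2 * d"
    using weight_vadd_le[of e n e'] lengths light by linarith
  ultimately show False
    using no_light lengths by (auto simp: has_light_codeword_def light_vecs_def)
qed

lemma pmf_bind_return_True: "pmf (bind_pmf M (\<lambda>x. return_pmf (P x))) True = measure_pmf.prob M {x. P x}"
  by (simp add: map_pmf_def[symmetric] pmf_map vimage_def)

lemma pmf_bind_le_add:
  fixes h :: "'a \<Rightarrow> real"
  assumes "finite (set_pmf M)" and "\<And>x. x \<in> set_pmf M \<Longrightarrow> pmf (F x) b \<le> pmf (G x) b + h x"
  shows "pmf (bind_pmf M F) b \<le> pmf (bind_pmf M G) b + measure_pmf.expectation M h"
proof -
  have "pmf (bind_pmf M F) b \<le> measure_pmf.expectation M (\<lambda>x. pmf (G x) b + h x)"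
    unfolding pmf_bind using assms by (intro integral_mono_AE integrable_measure_pmf_finite AE_pmfI)
  also have "\<dots> = pmf (bind_pmf M G) b + measure_pmf.expectation M h"
    using assms(1) by (simp add: pmf_bind integrable_measure_pmf_finite)
  finally show ?thesis .
qed

lemma pmf_bind_le_add_const:
  assumes "finite (set_pmf M)" and "\<And>x. x \<in> set_pmf M \<Longrightarrow> pmf (F x) b \<le> pmf (G x) b + c"
  shows "pmf (bind_pmf M F) b \<le> pmf (bind_pmf M G) b + c"
  using pmf_bind_le_add[of M F b G "\<lambda>_. c"] assms by simp

abbreviation heavy :: "nat \<Rightarrow> real \<Rightarrow> vec \<Rightarrow> bool" where
  "heavy n p e \<equiv> real (weight n e) > 2.01 * real n * p"

definition inversion_trial ::
  "nat \<Rightarrow> nat \<Rightarrow> real \<Rightarrow> (inst \<Rightarrow> vec list \<times> vec list \<times> vec \<Rightarrow> (vec \<times> vec \<times> vec) pmf) \<Rightarrow>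
   inst \<Rightarrow> vec \<Rightarrow> vec \<Rightarrow> vec \<Rightarrow> bool pmf" where
  "inversion_trial n k p Adv I r y e =
     bind_pmf (Adv I (fI n I (r, y, if heavy n p e then zerovec (2 * n) else e))) (\<lambda>out.
       return_pmf (out \<in> dom_set n k p \<and>
         fI n I out = fI n I (r, y, if heavy n p e then zerovec (2 * n) else e)))"

definition solving_trial ::
  "nat \<Rightarrow> (vec list \<times> vec list \<times> vec \<Rightarrow> vec pmf) \<Rightarrow> inst \<Rightarrow> vec \<Rightarrow> vec \<Rightarrow> vec \<Rightarrow> bool pmf" where
  "solving_trial n Solver I r y e =
     bind_pmf (Solver (fst I, snd I, encode n I r y e)) (\<lambda>y'. return_pmf (y' = y))"

lemma invert_success_eq_inversion_trial:
  "invert_success n k p Adv = pmf (bind_pmf (Gen n k) (\<lambda>I.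
     bind_pmf (pmf_of_set (vecs n)) (\<lambda>r. bind_pmf (pmf_of_set (vecs k)) (\<lambda>y.
     bind_pmf (noise p n) (inversion_trial n k p Adv I r y))))) True"
  unfolding invert_success_def Sample_def inversion_trial_def bind_assoc_pmf bind_return_pmf ..

lemma lsn_success_eq_solving_trial:
  "lsn_success n k p Solver = pmf (bind_pmf (Gen n k) (\<lambda>I.
     bind_pmf (pmf_of_set (vecs n)) (\<lambda>r. bind_pmf (pmf_of_set (vecs k)) (\<lambda>y.
     bind_pmf (noise p n) (solving_trial n Solver I r y))))) True"
  unfolding lsn_success_def solving_trial_def ..

lemma inversion_trial_le_solving_trial:
  assumes I: "I \<in> lsn_instances n k" and lengths: "length r = n" "length y = k" "length e = 2 * n"
  shows "pmf (inversion_trial n k p Adv I r y e) True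
    \<le> pmf (solving_trial n (reduction Adv) I r y e) True
      + (indicator {I. has_light_codeword n k (4.02 * real n * p) I} I + indicator {e. heavy n p e} e)"
    (is "?inv \<le> ?lsn + ?err")
proof (cases "has_light_codeword n k (4.02 * real n * p) I \<or> heavy n p e")
  case True
  then have "1 \<le> ?err"
    by auto
  moreover have "?inv \<le> 1" "0 \<le> ?lsn"
    by (simp_all add: pmf_le_1)
  ultimately show ?thesis
    by linarith
next
  case False
  let ?P = "Adv I (fst I, snd I, encode n I r y e)"
  have "4.02 * real n * p = 2 * (2.01 * real n * p)"
    by simp
  then have no_light: "\<not> has_light_codeword n k (2 * (2.01 * real n * p)) I"
    using False by metis
  have "?inv = measure_pmf.prob ?P {out. out \<in> dom_set n k p \<and> fI n I out = fI n I (r, y, e)}"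
    using False by (simp add: inversion_trial_def pmf_bind_return_True fI_def)
  also have "\<dots> \<le> measure_pmf.prob ?P {out. fst (snd out) = y}"
  proof (rule measure_pmf.finite_measure_mono)
    show "{out. out \<in> dom_set n k p \<and> fI n I out = fI n I (r, y, e)} \<subseteq> {out. fst (snd out) = y}"
    proof
      fix out assume out: "out \<in> {out. out \<in> dom_set n k p \<and> fI n I out = fI n I (r, y, e)}"
      obtain r' y' e' where "out = (r', y', e')"
        by (cases out)
      with out have "y' = y"
        using False lengths
        by (intro encode_eq_imp_eq[OF I no_light, of r y e r' y' e'])
           (auto simp: dom_set_def Wset_def fI_def)
      with \<open>out = (r', y', e')\<close> show "out \<in> {out. fst (snd out) = y}"
        by simp
    qed
  qed simp
  also have "\<dots> = ?lsn"
    by (simp add: solving_trial_def reduction_def map_pmf_def[symmetric] pmf_map vimage_def case_prod_beta)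
  finally show ?thesis
    using False by simp
qed

lemma set_pmf_uniform_vecs: "set_pmf (pmf_of_set (vecs m)) = vecs m"
proof (rule set_pmf_of_set)
  show "vecs m \<noteq> {}"
    using length_zerovec mem_vecs_iff by blast
qed simp

lemma invert_success_le_lsn_success:
  assumes "k \<le> n"
  shows "invert_success n k p Adv \<le> lsn_success n k p (reduction Adv)
    + measure (Gen n k) {I. has_light_codeword n k (4.02 * real n * p) I}
    + measure (noise p n) {e. heavy n p e}"
proof -
  let ?bad = "indicator {I. has_light_codeword n k (4.02 * real n * p) I} :: inst \<Rightarrow> real"
  let ?c = "measure (noise p n) {e. heavy n p e}"
  have noise_step: "pmf (bind_pmf (noise p n) (inversion_trial n k p Adv I r y)) True
    \<le> pmf (bind_pmf (noise p n) (solving_trial n (reduction Adv) I r y)) True + (?bad I + ?c)"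
    if "I \<in> lsn_instances n k" "length r = n" "length y = k" for I r y
  proof -
    have "pmf (bind_pmf (noise p n) (inversion_trial n k p Adv I r y)) True
      \<le> pmf (bind_pmf (noise p n) (solving_trial n (reduction Adv) I r y)) True
         + measure_pmf.expectation (noise p n) (\<lambda>e. ?bad I + indicator {e. heavy n p e} e)"
      using that set_pmf_noise[of p n]
      by (intro pmf_bind_le_add finite_set_pmf_noise inversion_trial_le_solving_trial) auto
    also have "measure_pmf.expectation (noise p n) (\<lambda>e. ?bad I + indicator {e. heavy n p e} e)
        = ?bad I + ?c"
      by (simp add: integrable_measure_pmf_finite finite_set_pmf_noise)
    finally show ?thesis .
  qed
  have "invert_success n k p Adv \<le> lsn_success n k p (reduction Adv)
      + measure_pmf.expectation (Gen n k) (\<lambda>I. ?bad I + ?c)"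
    unfolding invert_success_eq_inversion_trial lsn_success_eq_solving_trial
    using assms set_pmf_Gen[OF assms] finite_lsn_instances
    by (intro pmf_bind_le_add pmf_bind_le_add_const noise_step) (auto simp: set_pmf_uniform_vecs)
  also have "measure_pmf.expectation (Gen n k) (\<lambda>I. ?bad I + ?c)
      = measure (Gen n k) {I. has_light_codeword n k (4.02 * real n * p) I} + ?c"
    using assms by (simp add: integrable_measure_pmf_finite set_pmf_Gen finite_lsn_instances)
  finally show ?thesis
    by simp
qed

lemma invert_success_le_lsn_success_powr:
  fixes n k :: nat and p :: real
  assumes "0 < n" "0 < 4.03 * p" "4.03 * p < 1"
    and entropy: "H2 (4.03 * p) + 4.03 * p * log 2 3 < 1 - real k / real n"
  shows "invert_success n k p Adv \<le> lsn_success n k p (reduction Adv) + 3 * 2 powr (- (p * real n) / 200)"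
proof -
  have pos: "0 < 4.03 * p * log 2 3"
    using assms(2) by simp
  have bound: "4.03 * p * log 2 3 < 1 - real k / real n"
    using entropy H2_nonneg[OF assms(2,3)] by linarith
  have "4.03 * p * (3 / 2) \<le> 4.03 * p * log 2 3"
    using assms(2) log2_3_ge by (intro mult_left_mono) auto
  moreover have "0 \<le> real k / real n"
    by simp
  ultimately have small: "4.03 * p \<le> 2 / 3"
    using bound by argo
  have "real k / real n < 1"
    using pos bound by simp
  then have "k \<le> n"
    using assms(1) by (simp add: divide_less_eq)
  have light: "measure (Gen n k) {I. has_light_codeword n k (4.02 * real n * p) I}
      \<le> 2 * 2 powr (- (p * real n) / 200)"
  proof -
    have weight_bound: "4.03 * p * real n - p * real n / 100 = 4.02 * real n * p"
      by simp
    show ?thesis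
      using prob_has_light_codeword_le_powr[OF assms(1) \<open>k \<le> n\<close> assms(2) small _ less_imp_le[OF entropy],
          of "p * real n / 100", unfolded weight_bound] assms(2)
      by simp
  qed
  have heavy: "measure (noise p n) {e. heavy n p e} \<le> 2 powr (- (p * real n) / 200)"
  proof -
    have "(2 * real n + real n / 100) * p = 2.01 * real n * p"
      by simp
    then have "measure (noise p n) {e. heavy n p e} \<le> 2 powr (- (real n / 100) * p)"
      using prob_weight_gt_le_powr[of p "real n / 100" n] assms(2,3) by simp
    also have "\<dots> \<le> 2 powr (- (p * real n) / 200)"
      using assms(2) by simp
    finally show ?thesis .
  qed
  show ?thesis
    using invert_success_le_lsn_success[OF \<open>k \<le> n\<close>, of p Adv] light heavy by linarith
qed

section \<open>Asymptotics\<close>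

lemma eventually_powr_le_inverse_power:
  fixes g :: "nat \<Rightarrow> real"
  assumes "(\<lambda>n. log 2 (real n)) \<in> o(g)" "0 < c"
  shows "eventually (\<lambda>n. 2 powr (- c * \<bar>g n\<bar>) \<le> 1 / real n ^ m) sequentially"
proof -
  have "0 < c / (m + 1)"
    using assms(2) by simp
  from landau_o.smallD[OF assms(1) this] eventually_ge_at_top[of 1]
  show ?thesis
  proof eventually_elim
    case (elim n)
    have "0 \<le> log 2 (real n)"
      using elim(2) by simp
    then have "real m * log 2 (real n) \<le> c * \<bar>g n\<bar>"
      using elim(1) assms(2) by (simp add: field_simps)
    then have "2 powr (- c * \<bar>g n\<bar>) \<le> 2 powr (- (real m * log 2 (real n)))"
      by simp
    also have "\<dots> = 1 / real n ^ m"
      using elim(2) by (simp add: powr_minus_divide powr_powr[symmetric] mult.commute[of "real m"] powr_realpow)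
    finally show ?case .
  qed
qed

lemma log_smallo_times_n:
  assumes "(\<lambda>n. log 2 (real n) / real n) \<in> o(p)"
  shows "(\<lambda>n. log 2 (real n)) \<in> o(\<lambda>n. p n * real n)"
proof -
  have "(\<lambda>n. log 2 (real n) / real n * real n) = (\<lambda>n. log 2 (real n))"
    by (simp add: fun_eq_iff log_def)
  then show ?thesis
    using landau_o.small.mult_right[OF assms, of real] by simp
qed

lemma inverse_power_gap:
  assumes "3 \<le> n"
  shows "4 / real n ^ (c + 2) + 1 / real n ^ (c + 1) \<le> 1 / real n ^ c"
proof -
  have "3 * real n \<le> real n * real n"
    using assms by (intro mult_right_mono) auto
  then have "4 + real n \<le> real n * real n"
    using assms by linarith
  have "4 / real n ^ (c + 2) + 1 / real n ^ (c + 1) = (4 + real n) / real n ^ (c + 2)"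
    using assms by (simp add: field_simps power_add)
  also have "\<dots> \<le> (real n * real n) / real n ^ (c + 2)"
    using \<open>4 + real n \<le> real n * real n\<close> by (intro divide_right_mono) auto
  also have "\<dots> = 1 / real n ^ c"
    using assms by (simp add: power_add power2_eq_square)
  finally show ?thesis .
qed

theorem theoremB3:
  fixes k :: "nat \<Rightarrow> nat" and p :: "nat \<Rightarrow> real"
    and Adv :: "nat \<Rightarrow> inst \<Rightarrow> vec list \<times> vec list \<times> vec \<Rightarrow> (vec \<times> vec \<times> vec) pmf"
  assumes "(\<lambda>n. log 2 (real n)) \<in> o(\<lambda>n. real (k n))"
    and "(\<lambda>n. log 2 (real n) / real n) \<in> o(\<lambda>n. p n)"
    and "eventually (\<lambda>n. 0 < 4.03 * p n \<and> 4.03 * p n < 1 \<and>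
           H2 (4.03 * p n) + 4.03 * p n * log 2 3 < 1 - real (k n) / real n) sequentially"
    and "\<exists>c::nat. eventually (\<lambda>n. invert_success n (k n) (p n) (Adv n) \<ge> 1 / real n ^ c) sequentially"
  shows "\<exists>c::nat. eventually (\<lambda>n.
           lsn_success n (k n) (p n) (reduction (Adv n)) \<ge> 1 / 2 ^ k n + 1 / real n ^ c) sequentially"
proof -
  obtain c :: nat
    where inverts: "eventually (\<lambda>n. invert_success n (k n) (p n) (Adv n) \<ge> 1 / real n ^ c) sequentially"
    using assms(4) by blast
  have noise_small:
    "eventually (\<lambda>n. 2 powr (- (1 / 200) * \<bar>p n * real n\<bar>) \<le> 1 / real n ^ (c + 2)) sequentially"
    by (rule eventually_powr_le_inverse_power[OF log_smallo_times_n[OF assms(2)]]) simp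
  have secret_small: "eventually (\<lambda>n. 2 powr (- 1 * \<bar>real (k n)\<bar>) \<le> 1 / real n ^ (c + 2)) sequentially"
    by (rule eventually_powr_le_inverse_power[OF assms(1)]) simp
  have "eventually (\<lambda>n.
      lsn_success n (k n) (p n) (reduction (Adv n)) \<ge> 1 / 2 ^ k n + 1 / real n ^ (c + 1)) sequentially"
    using inverts noise_small secret_small assms(3) eventually_ge_at_top[of 3]
  proof eventually_elim
    case (elim n)
    then have "invert_success n (k n) (p n) (Adv n)
        \<le> lsn_success n (k n) (p n) (reduction (Adv n)) + 3 / real n ^ (c + 2)"
      using invert_success_le_lsn_success_powr[of n "p n" "k n" "Adv n"] by (simp add: abs_of_nonneg)
    moreover have "1 / 2 ^ k n \<le> 1 / real n ^ (c + 2)"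
      using elim(3) by (simp add: powr_minus_divide powr_realpow)
    ultimately show ?case
      using elim(1) inverse_power_gap[OF elim(5), of c] by linarith
  qed
  then show ?thesis
    by blast
qed

end
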